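(* Let $X$ be a tree of bounded valence, $p$ a transition kernel on $X_0$ with $(X_0,p)$ irreducible and $k\ge0$ with $d(x,y)>k\Rightarrow p(x,y)=0$. For any distinct $x,y\in X_0$ with geodesic $[x,y]=(x_0,\dots,x_m)$, any $a\in\mathcal{B}(x)\setminus\mathcal{B}(y)$, $b\in\mathcal{B}(y)$, and any complex $z$ of sufficiently small modulus, $$G_z(a,b;\mathcal{B}(y)^\complement)=\sum_{\substack{(c_0,\dots,c_l)\in\Xi_{[x,y]}\\ c_0=a,\ c_l=b}}\ \prod_{j=1}^lG_z\big(c_{j-1},c_j;\mathcal{B}(x_{i_j})^\complement\big),$$ where $(i_1,\dots,i_l)$ are the crossing indices of $(c_0,\dots,c_l)$; the sum is finite.
   Context: $\mathcal{B}(w)=\{v:d(w,v)\le k\}$, $\partial\mathcal{B}(w)=\{v:d(w,v)=k+1\}$. $p^{(n)}(a,b;\Omega)=\sum p(\omega_0,\omega_1)\cdots p(\omega_{n-1},\omega_n)$ over sequences from $a$ to $b$ with $\omega_1,\dots,\omega_{n-1}\in\Omega$ ($p^{(0)}(a,b;\Omega)=\delta_a(b)$), and $G_z(a,b;\Omega)=\sum_np^{(n)}(a,b;\Omega)z^n$. $\Xi_w=\{(a,b)\in\partial\mathcal{B}(w)\times\mathcal{B}(w):\exists n,\,p^{(n)}(a,b;\mathcal{B}(w)^\complement)>0\}$. $\Xi_{[x,y]}$ is the set of tuples $(c_0,\dots,c_l)$, $0<l\le m$, for which there are integers $0<i_1<\dots<i_l\le m$ with $c_0\in\mathcal{B}(x)\cap\partial\mathcal{B}(x_{i_1})$,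 $c_j\in\mathcal{B}(x_{i_j})\cap\partial\mathcal{B}(x_{i_{j+1}})$ ($1\le j\le l-1$), $c_l\in\mathcal{B}(x_{i_l})\cap\mathcal{B}(y)$ and $(c_{j-1},c_j)\in\Xi_{x_{i_j}}$ for all $j$. These indices (crossing indices) are uniquely given by $i_s=1+\max\{i:c_{s-1}\in\mathcal{B}(x_i)\}$. *)

theory Defs
  imports "HOL-Analysis.Analysis"
begin

section \<open>Trees (vertex set = the whole type 'a, edges given by E)\<close>

definition is_walk :: "('a \<Rightarrow> 'a \<Rightarrow> bool) \<Rightarrow> 'a list \<Rightarrow> bool" where
  "is_walk E ws \<longleftrightarrow> ws \<noteq> [] \<and> (\<forall>i. Suc i < length ws \<longrightarrow> E (ws ! i) (ws ! Suc i))"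

definition is_tree :: "('a \<Rightarrow> 'a \<Rightarrow> bool) \<Rightarrow> bool" where
  "is_tree E \<longleftrightarrow>
     (\<forall>u v. E u v \<longrightarrow> E v u) \<and> (\<forall>u. \<not> E u u) \<and>
     (\<forall>u v. \<exists>ws. is_walk E ws \<and> hd ws = u \<and> last ws = v) \<and>
     \<not> (\<exists>cs. length cs \<ge> 3 \<and> distinct cs \<and> is_walk E cs \<and> E (last cs) (hd cs))"

definition bounded_valence :: "('a \<Rightarrow> 'a \<Rightarrow> bool) \<Rightarrow> bool" where
  "bounded_valence E \<longleftrightarrow> (\<exists>D::nat. \<forall>v. finite {w. E v w} \<and> card {w. E v w} \<le> D)"

definition gdist :: "('a \<Rightarrow> 'a \<Rightarrow> bool) \<Rightarrow> 'a \<Rightarrow> 'a \<Rightarrow> nat" where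
  "gdist E u v = (LEAST n. \<exists>ws. is_walk E ws \<and> length ws = Suc n \<and> hd ws = u \<and> last ws = v)"

definition is_geodesic :: "('a \<Rightarrow> 'a \<Rightarrow> bool) \<Rightarrow> 'a \<Rightarrow> 'a \<Rightarrow> 'a list \<Rightarrow> bool" where
  "is_geodesic E x y xs \<longleftrightarrow> is_walk E xs \<and> hd xs = x \<and> last xs = y \<and>
     length xs = Suc (gdist E x y)"

definition ball_k :: "('a \<Rightarrow> 'a \<Rightarrow> bool) \<Rightarrow> nat \<Rightarrow> 'a \<Rightarrow> 'a set" where
  "ball_k E k w = {v. gdist E w v \<le> k}"

definition sphere_k :: "('a \<Rightarrow> 'a \<Rightarrow> bool) \<Rightarrow> nat \<Rightarrow> 'a \<Rightarrow> 'a set" where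
  "sphere_k E k w = {v. gdist E w v = Suc k}"

definition pres :: "('a \<Rightarrow> 'a \<Rightarrow> real) \<Rightarrow> 'a set \<Rightarrow> nat \<Rightarrow> 'a \<Rightarrow> 'a \<Rightarrow> real" where
  "pres p \<Omega> n a b =
     (\<Sum>\<^sub>\<infinity> ws \<in> {ws. length ws = Suc n \<and> ws ! 0 = a \<and> ws ! n = b \<and>
                     (\<forall>i. 0 < i \<and> i < n \<longrightarrow> ws ! i \<in> \<Omega>)}.
        \<Prod>i<n. p (ws ! i) (ws ! Suc i))"

definition green :: "('a \<Rightarrow> 'a \<Rightarrow> real) \<Rightarrow> complex \<Rightarrow> 'a \<Rightarrow> 'a \<Rightarrow> 'a set \<Rightarrow> complex" where
  "green p z a b \<Omega> = (\<Sum>n. complex_of_real (pres p \<Omega> n a b) * z ^ n)"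

definition Xi_w :: "('a \<Rightarrow> 'a \<Rightarrow> bool) \<Rightarrow> nat \<Rightarrow> ('a \<Rightarrow> 'a \<Rightarrow> real) \<Rightarrow> 'a \<Rightarrow> ('a \<times> 'a) set" where
  "Xi_w E k p w = {(a, b). a \<in> sphere_k E k w \<and> b \<in> ball_k E k w \<and>
                          (\<exists>n. pres p (- ball_k E k w) n a b > 0)}"

text \<open>Xi_[x,y] for the geodesic xs = (x_0,...,x_m); a tuple (c_0,...,c_l) is a list of length l+1;
  the indices i_1,...,i_l are the list is ! 0, ..., is ! (l-1).\<close>
definition Xi_geo :: "('a \<Rightarrow> 'a \<Rightarrow> bool) \<Rightarrow> nat \<Rightarrow> ('a \<Rightarrow> 'a \<Rightarrow> real) \<Rightarrow> 'a list \<Rightarrow> 'a list set" where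
  "Xi_geo E k p xs = {cs. let l = length cs - 1; m = length xs - 1 in
     0 < l \<and> l \<le> m \<and>
     (\<exists>is. length is = l \<and> sorted_wrt (<) is \<and> 0 < is ! 0 \<and> is ! (l - 1) \<le> m \<and>
        cs ! 0 \<in> ball_k E k (xs ! 0) \<inter> sphere_k E k (xs ! (is ! 0)) \<and>
        (\<forall>j. 1 \<le> j \<and> j \<le> l - 1 \<longrightarrow>
             cs ! j \<in> ball_k E k (xs ! (is ! (j - 1))) \<inter> sphere_k E k (xs ! (is ! j))) \<and>
        cs ! l \<in> ball_k E k (xs ! (is ! (l - 1))) \<inter> ball_k E k (xs ! m) \<and>
        (\<forall>j. 1 \<le> j \<and> j \<le> l \<longrightarrow> (cs ! (j - 1), cs ! j) \<in> Xi_w E k p (xs ! (is ! (j - 1)))))}"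

definition cross_idx :: "('a \<Rightarrow> 'a \<Rightarrow> bool) \<Rightarrow> nat \<Rightarrow> 'a list \<Rightarrow> 'a list \<Rightarrow> nat \<Rightarrow> nat" where
  "cross_idx E k xs cs s = Suc (Max {i. i < length xs \<and> cs ! (s - 1) \<in> ball_k E k (xs ! i)})"

end

theory Submission
  imports Defs
begin

text \<open>
  Let c be the current position of a walk, outside B(y) but inside some ball B(x_j), and let
  i be its crossing index, so that B(x_i) is the first ball along [x, y] after the last one
  containing c. In a tree the distance from c to x_0, ..., x_m first decreases and then
  increases by one per step; hence c lies at distance k + 1 from x_i, on the side of the edge
  x_(i-1) x_i away from y, and a step of length at most k from such a vertex either enters
  B(x_i) or again lands on that side outside B(x_i), in particular outside B(y). A walk from
  c to b \<in> B(y) whose interior avoids B(y) therefore enters B(x_i) first, either at b or at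
  some c' \<in> B(x_i) - B(y) of larger crossing index. Splitting walks at this first entrance
  turns their weights into convolutions and Green functions into products; iterating gives
  the sum over chains, which is finite because crossing indices increase strictly and balls
  are finite.
\<close>

section \<open>Walks\<close>

lemma is_walk_iff_successively: "is_walk E ws \<longleftrightarrow> ws \<noteq> [] \<and> successively E ws"
  by (simp add: is_walk_def successively_conv_nth)

lemma successively_take: "successively P xs \<Longrightarrow> successively P (take n xs)"
  by (metis append_take_drop_id successively_append_iff)

lemma successively_drop: "successively P xs \<Longrightarrow> successively P (drop n xs)"
  by (metis append_take_drop_id successively_append_iff)

lemma is_walk_take: "is_walk E ws \<Longrightarrow> 0 < n \<Longrightarrow> is_walk E (take n ws)"
  by (auto simp: is_walk_iff_successively successively_take)

lemma is_walk_drop: "is_walk E ws \<Longrightarrow> n < length ws \<Longrightarrow> is_walk E (drop n ws)"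
  by (auto simp: is_walk_iff_successively successively_drop)

lemma is_walk_Cons: "is_walk E (u # v # ws) \<longleftrightarrow> E u v \<and> is_walk E (v # ws)"
  by (simp add: is_walk_iff_successively)

lemma is_walk_append: "is_walk E xs \<Longrightarrow> is_walk E (last xs # ys) \<Longrightarrow> is_walk E (xs @ ys)"
  by (auto simp: is_walk_iff_successively successively_append_iff successively_Cons)

lemma is_walk_nth_edge: "is_walk E ws \<Longrightarrow> Suc i < length ws \<Longrightarrow> E (ws ! i) (ws ! Suc i)"
  by (simp add: is_walk_def)

lemma is_walk_nth_0: "is_walk E ws \<Longrightarrow> ws ! 0 = hd ws"
  by (simp add: is_walk_def hd_conv_nth)

lemma is_walk_nth_last: "is_walk E ws \<Longrightarrow> ws ! (length ws - 1) = last ws"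
  by (simp add: is_walk_def last_conv_nth)

lemma all_nat_conv_0_Suc: "(\<forall>i. P i) \<longleftrightarrow> P 0 \<and> (\<forall>i. P (Suc i))"
  by (metis not0_implies_Suc)

lemma distinct_hd_eq_last: "distinct xs \<Longrightarrow> hd xs = last xs \<Longrightarrow> length xs \<le> 1"
proof (cases xs)
  case (Cons a ys)
  assume "distinct xs" "hd xs = last xs"
  then have "ys = []" using Cons last_in_set[of ys] by (cases "ys = []") auto
  then show ?thesis using Cons by simp
qed simp

fun non_backtracking :: "'a list \<Rightarrow> bool" where
  "non_backtracking (x # y # z # ws) \<longleftrightarrow> x \<noteq> z \<and> non_backtracking (y # z # ws)"
| "non_backtracking _ \<longleftrightarrow> True"

lemma non_backtracking_conv_nth:
  "non_backtracking ws \<longleftrightarrow> (\<forall>i. Suc (Suc i) < length ws \<longrightarrow> ws ! i \<noteq> ws ! Suc (Suc i))"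
proof (induction ws rule: non_backtracking.induct)
  case (1 x y z ws)
  show ?case by (subst all_nat_conv_0_Suc) (simp add: "1")
qed auto

lemma non_backtracking_Cons:
  "non_backtracking (x # ws) \<longleftrightarrow> non_backtracking ws \<and> (2 \<le> length ws \<longrightarrow> x \<noteq> ws ! 1)"
  by (cases ws rule: non_backtracking.cases) auto

lemma non_backtracking_snoc:
  "non_backtracking (ws @ [x]) \<longleftrightarrow>
     non_backtracking ws \<and> (2 \<le> length ws \<longrightarrow> ws ! (length ws - 2) \<noteq> x)"
  by (induction ws rule: non_backtracking.induct) (auto simp: nth_append)

lemma non_backtracking_rev [simp]: "non_backtracking (rev ws) \<longleftrightarrow> non_backtracking ws"
  by (induction ws) (auto simp: non_backtracking_snoc non_backtracking_Cons rev_nth)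

lemma non_backtracking_glue:
  "non_backtracking (xs @ [x, y]) \<Longrightarrow> non_backtracking (x # y # ys) \<Longrightarrow>
     non_backtracking (xs @ x # y # ys)"
  by (induction xs rule: non_backtracking.induct) auto

locale connected_graph =
  fixes E :: "'a \<Rightarrow> 'a \<Rightarrow> bool"
  assumes edge_sym: "E u v \<Longrightarrow> E v u"
    and connected: "\<exists>ws. is_walk E ws \<and> hd ws = u \<and> last ws = v"
begin

abbreviation d where "d \<equiv> gdist E"

lemma shortest_walk_exists:
  obtains ws where "is_walk E ws" "length ws = Suc (d u v)" "hd ws = u" "last ws = v"
proof -
  obtain ws where "is_walk E ws" "hd ws = u" "last ws = v"
    using connected by blast
  then have "\<exists>n ws. is_walk E ws \<and> length ws = Suc n \<and> hd ws = u \<and> last ws = v"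
    by (metis Suc_pred is_walk_def length_greater_0_conv)
  then have "\<exists>ws. is_walk E ws \<and> length ws = Suc (d u v) \<and> hd ws = u \<and> last ws = v"
    unfolding gdist_def by (rule LeastI_ex)
  then show ?thesis using that by blast
qed

lemma dist_less_length:
  assumes "is_walk E ws" "hd ws = u" "last ws = v"
  shows "d u v < length ws"
proof -
  have "length ws = Suc (length ws - 1)" using assms(1) by (simp add: is_walk_def)
  then have "d u v \<le> length ws - 1"
    unfolding gdist_def using assms by (intro Least_le) blast
  then show ?thesis using \<open>length ws = _\<close> by linarith
qed

lemma dist_nth_le:
  assumes "is_walk E ws" "i \<le> j" "j < length ws"
  shows "d (ws ! i) (ws ! j) \<le> j - i"
proof -
  let ?seg = "drop i (take (Suc j) ws)"
  have "d (ws ! i) (ws ! j) < length ?seg"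
    using assms by (intro dist_less_length is_walk_take is_walk_drop)
      (auto simp: hd_drop_conv_nth last_conv_nth)
  then show ?thesis using assms by simp
qed

lemma is_walk_rev: "is_walk E ws \<Longrightarrow> is_walk E (rev ws)"
  by (auto simp: is_walk_iff_successively elim!: successively_mono intro: edge_sym)

lemma dist_sym: "d u v = d v u"
proof -
  have "d v u \<le> d u v" for u v
  proof -
    obtain ws where "is_walk E ws" "length ws = Suc (d u v)" "hd ws = u" "last ws = v"
      by (rule shortest_walk_exists)
    then have "d v u < length (rev ws)"
      by (intro dist_less_length is_walk_rev) (auto simp: hd_rev last_rev)
    then show ?thesis using \<open>length ws = _\<close> by simp
  qed
  then show ?thesis by (meson antisym)
qed

lemma dist_self [simp]: "d u u = 0"
  using dist_less_length[of "[u]" u u] by (simp add: is_walk_def)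

lemma dist_eq_0D:
  assumes "d u v = 0"
  shows "u = v"
proof -
  obtain ws where "is_walk E ws" "length ws = Suc (d u v)" "hd ws = u" "last ws = v"
    by (rule shortest_walk_exists)
  with assms show ?thesis by (cases ws) auto
qed

lemma dist_triangle: "d u w \<le> d u v + d v w"
proof -
  obtain xs where xs: "is_walk E xs" "length xs = Suc (d u v)" "hd xs = u" "last xs = v"
    by (rule shortest_walk_exists)
  obtain ys where ys: "is_walk E ys" "length ys = Suc (d v w)" "hd ys = v" "last ys = w"
    by (rule shortest_walk_exists)
  then have ys': "ys = v # tl ys" by (cases ys) auto
  have "d u w < length (xs @ tl ys)"
  proof (rule dist_less_length)
    show "is_walk E (xs @ tl ys)" using xs ys ys' by (intro is_walk_append) auto
    show "hd (xs @ tl ys) = u" using xs by (simp add: is_walk_def)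
    show "last (xs @ tl ys) = w"
      using xs ys ys' by (metis append_Nil2 last_ConsL last_appendR last_tl)
  qed
  then show ?thesis using xs ys by simp
qed

lemma finite_dist_le:
  assumes "bounded_valence E"
  shows "finite {v. d u v \<le> r}"
proof (induction r arbitrary: u)
  case 0
  have "{v. d u v \<le> 0} = {u}" using dist_eq_0D by auto
  then show ?case by simp
next
  case (Suc r)
  have "{v. d u v \<le> Suc r} \<subseteq> insert u (\<Union>w\<in>{w. E u w}. {v. d w v \<le> r})"
  proof
    fix v assume v: "v \<in> {v. d u v \<le> Suc r}"
    show "v \<in> insert u (\<Union>w\<in>{w. E u w}. {v. d w v \<le> r})"
    proof (cases "u = v")
      case False
      obtain ws where ws: "is_walk E ws" "length ws = Suc (d u v)" "hd ws = u" "last ws = v"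
        by (rule shortest_walk_exists)
      have "d u v \<noteq> 0" using False dist_eq_0D by blast
      then have "1 < length ws" using ws(2) by simp
      then have "E u (ws ! 1)"
        using is_walk_nth_edge[OF ws(1), of 0] is_walk_nth_0[OF ws(1)] ws(3) by simp
      moreover have "d (ws ! 1) v \<le> r"
        using dist_nth_le[OF ws(1), of 1 "length ws - 1"] is_walk_nth_last[OF ws(1)] ws v
          \<open>1 < length ws\<close>
        by simp
      ultimately show ?thesis by blast
    qed simp
  qed
  moreover have "finite {w. E u w}" using assms unfolding bounded_valence_def by blast
  then have "finite (insert u (\<Union>w\<in>{w. E u w}. {v. d w v \<le> r}))"
    by (simp add: Suc.IH)
  ultimately show ?case by (rule finite_subset)
qed

lemma shortest_walk_non_backtracking:
  assumes walk: "is_walk E ws" and shortest: "length ws = Suc (d (hd ws) (last ws))"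
  shows "non_backtracking ws"
  unfolding non_backtracking_conv_nth
proof (intro allI impI notI)
  fix i assume i: "Suc (Suc i) < length ws" and loop: "ws ! i = ws ! Suc (Suc i)"
  let ?short = "take (Suc i) ws @ drop (Suc (Suc (Suc i))) ws"
  have last_take: "last (take (Suc i) ws) = ws ! Suc (Suc i)"
    using i loop by (subst last_conv_nth) auto
  then have "is_walk E (last (take (Suc i) ws) # drop (Suc (Suc (Suc i))) ws)"
    using walk i by (metis Cons_nth_drop_Suc is_walk_drop)
  then have "is_walk E ?short" using walk by (intro is_walk_append is_walk_take) auto
  moreover have "hd ?short = hd ws" using i by (cases ws) auto
  moreover have "last ?short = last ws"
  proof (cases "Suc (Suc (Suc i)) < length ws")
    case False
    then have "length ws = Suc (Suc (Suc i))" using i by simp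
    then show ?thesis using walk last_take last_conv_nth[of ws] by (auto simp: is_walk_def)
  qed simp
  ultimately have "d (hd ws) (last ws) < length ?short" by (rule dist_less_length)
  then show False using shortest i by simp
qed

lemma mem_ball_k: "c \<in> ball_k E k w \<longleftrightarrow> d c w \<le> k"
  by (simp add: ball_k_def dist_sym)

lemma mem_sphere_k: "c \<in> sphere_k E k w \<longleftrightarrow> d c w = Suc k"
  by (simp add: sphere_k_def dist_sym)

end

section \<open>Trees\<close>

locale tree =
  fixes E :: "'a \<Rightarrow> 'a \<Rightarrow> bool"
  assumes tree: "is_tree E"

sublocale tree \<subseteq> connected_graph
  using tree unfolding is_tree_def by unfold_locales blast+

context tree
begin

lemma edge_irrefl: "\<not> E u u"
  using tree unfolding is_tree_def by blast

lemma no_cycle: "3 \<le> length cs \<Longrightarrow> distinct cs \<Longrightarrow> is_walk E cs \<Longrightarrow> \<not> E (last cs) (hd cs)"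
  using tree unfolding is_tree_def by blast

lemma dist_edge: "E u v \<Longrightarrow> d u v = 1"
  using dist_less_length[of "[u, v]" u v] dist_eq_0D[of u v] edge_irrefl
  by (fastforce simp: is_walk_def less_Suc_eq)

lemma non_backtracking_walk_distinct:
  "is_walk E ws \<Longrightarrow> non_backtracking ws \<Longrightarrow> distinct ws"
proof (induction ws)
  case (Cons u ws)
  show ?case
  proof (cases "ws = []")
    case False
    have "distinct ws"
      using Cons False by (intro Cons.IH)
        (auto simp: is_walk_iff_successively successively_Cons non_backtracking_Cons)
    moreover have "u \<notin> set ws"
    proof
      assume "u \<in> set ws"
      then obtain j where j: "j < length ws" "ws ! j = u" by (auto simp: in_set_conv_nth)
      let ?cycle = "u # take j ws"
      have "distinct ?cycle"
        using \<open>distinct ws\<close> j by (auto simp: in_set_conv_nth nth_eq_iff_index_eq)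
      moreover have "is_walk E ?cycle"
        using is_walk_take[OF Cons.prems(1), of "Suc j"] by simp
      moreover have "last ?cycle = (u # ws) ! j"
        using j by (cases j) (auto simp: last_conv_nth)
      then have "E (last ?cycle) (hd ?cycle)"
        using is_walk_nth_edge[OF Cons.prems(1), of j] j by simp
      ultimately have "length ?cycle < 3" using no_cycle not_le by blast
      then consider "j = 0" | "j = 1" using j by force
      then show False
      proof cases
        case 1
        then show False using \<open>E (last ?cycle) (hd ?cycle)\<close> edge_irrefl by simp
      next
        case 2
        then show False using Cons.prems(2) j by (simp add: non_backtracking_Cons)
      qed
    qed
    ultimately show ?thesis by simp
  qed simp
qed simp

lemma closed_non_backtracking_walk:
  "is_walk E ws \<Longrightarrow> non_backtracking ws \<Longrightarrow> hd ws = last ws \<Longrightarrow> length ws \<le> 1"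
  using non_backtracking_walk_distinct distinct_hd_eq_last by blast

lemma non_backtracking_walk_rev_append:
  assumes "is_walk E (u # w # W)" "is_walk E (u # q # Q)"
    and "non_backtracking (u # w # W)" "non_backtracking (u # q # Q)" "w \<noteq> q"
  shows "is_walk E (rev W @ w # u # q # Q) \<and> non_backtracking (rev W @ w # u # q # Q)"
proof
  have "is_walk E (rev W @ [w, u])" using is_walk_rev[OF assms(1)] by simp
  then show "is_walk E (rev W @ w # u # q # Q)"
    using assms(2) by (metis append.assoc append_Cons append_Nil is_walk_append last_snoc)
  have "non_backtracking ((rev W @ [w]) @ [u, q])"
    using assms(3,5) non_backtracking_rev[of "q # u # w # W"] by simp
  then show "non_backtracking (rev W @ w # u # q # Q)"
    using assms(4) non_backtracking_glue by fastforce
qed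

lemma non_backtracking_walk_unique:
  assumes "is_walk E W" "is_walk E Q" "non_backtracking W" "non_backtracking Q"
    and "hd W = hd Q" "last W = last Q"
  shows "W = Q"
  using assms
proof (induction W arbitrary: Q)
  case (Cons u W)
  obtain Q' where Q: "Q = u # Q'" using Cons.prems by (cases Q) (auto simp: is_walk_def)
  consider "W = []" | "Q' = []" | w W' q Q'' where "W = w # W'" "Q' = q # Q''"
    by (meson list.exhaust)
  then show ?case
  proof cases
    case 1
    then have "length Q \<le> 1" using Cons.prems Q by (intro closed_non_backtracking_walk) auto
    then show ?thesis using 1 Q by simp
  next
    case 2
    then have "length (u # W) \<le> 1" using Cons.prems Q by (intro closed_non_backtracking_walk) auto
    then show ?thesis using 2 Q by simp
  next
    case 3
    show ?thesis
    proof (cases "w = q")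
      case True
      have "is_walk E W" "is_walk E Q'" "non_backtracking W" "non_backtracking Q'"
        using Cons.prems(1-4) Q 3 by (auto simp: is_walk_Cons non_backtracking_Cons)
      then have "W = Q'" using Cons.IH[of Q'] Cons.prems(6) Q 3 True by simp
      then show ?thesis using Q by simp
    next
      case False
      \<comment> \<open>Going back along W and out along Q gives a closed non-backtracking walk.\<close>
      let ?R = "rev W' @ w # u # q # Q''"
      have "is_walk E ?R \<and> non_backtracking ?R"
        using non_backtracking_walk_rev_append Cons.prems(1-4) Q 3 False by simp
      moreover have "hd ?R = last ?R"
        using Cons.prems(6) Q 3 by (cases W' rule: rev_cases) (auto simp: hd_append)
      ultimately have "length ?R \<le> 1" using closed_non_backtracking_walk by blast
      then show ?thesis by simp
    qed
  qed
qed (simp add: is_walk_def)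

lemma non_backtracking_walk_length:
  assumes "is_walk E ws" "non_backtracking ws"
  shows "length ws = Suc (d (hd ws) (last ws))"
proof -
  obtain P where P: "is_walk E P" "length P = Suc (d (hd ws) (last ws))"
    "hd P = hd ws" "last P = last ws"
    by (rule shortest_walk_exists)
  then have "non_backtracking P" using shortest_walk_non_backtracking by simp
  then have "P = ws" using non_backtracking_walk_unique P assms by blast
  then show ?thesis using P by simp
qed

lemma dist_edge_cases:
  assumes "E s t"
  shows "d u t = Suc (d u s) \<or> d u s = Suc (d u t)"
proof -
  obtain P where P: "is_walk E P" "length P = Suc (d u s)" "hd P = u" "last P = s"
    by (rule shortest_walk_exists)
  have walk: "is_walk E (P @ [t])"
    using P assms by (intro is_walk_append) (auto simp: is_walk_def)
  show ?thesis
  proof (cases "non_backtracking (P @ [t])")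
    case True
    then have "length (P @ [t]) = Suc (d u t)"
      using non_backtracking_walk_length[OF walk] P by (simp add: is_walk_def)
    then show ?thesis using P by simp
  next
    case False
    moreover have "non_backtracking P" using P shortest_walk_non_backtracking by simp
    ultimately have len: "2 \<le> length P" and "P ! (length P - 2) = t"
      by (auto simp: non_backtracking_snoc)
    then have "d u t \<le> length P - 2"
      using dist_nth_le[OF P(1), of 0 "length P - 2"] is_walk_nth_0[OF P(1)] P(3) by simp
    moreover have "d u s \<le> d u t + 1"
      using dist_triangle[of u s t] dist_edge[OF edge_sym[OF assms]] by simp
    ultimately show ?thesis using P(2) len by linarith
  qed
qed

lemma edge_between_sides_unique:
  assumes st: "E s t" and ww': "E w w'"
    and w: "d w s < d w t" and w': "d w' t < d w' s"
  shows "w = s \<and> w' = t"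
proof -
  obtain P where P: "is_walk E P" "length P = Suc (d w' t)" "hd P = w'" "last P = t"
    by (rule shortest_walk_exists)
  have "d w t \<le> 1 + d w' t" "d w' s \<le> 1 + d w s"
    using dist_triangle dist_edge ww' edge_sym by (metis dist_sym)+
  then have same: "d w s = d w' t" using w w' by linarith
  let ?R = "w # P @ [s]"
  have "is_walk E (P @ [s])"
    using P st edge_sym by (intro is_walk_append) (auto simp: is_walk_def)
  then have walk: "is_walk E ?R"
    using P ww' by (cases P) (auto simp: is_walk_Cons)
  have "d w' s = Suc (d w' t)" using dist_edge_cases[OF st, of w'] w' by simp
  then have "non_backtracking (P @ [s])"
    using \<open>is_walk E (P @ [s])\<close> P by (intro shortest_walk_non_backtracking) (auto simp: is_walk_def)
  moreover have "\<not> non_backtracking ?R"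
  proof
    assume "non_backtracking ?R"
    then have "length ?R = Suc (d w s)" using non_backtracking_walk_length[OF walk] by simp
    then show False using P(2) same by simp
  qed
  ultimately have backtrack: "(P @ [s]) ! 1 = w" by (auto simp: non_backtracking_Cons)
  show ?thesis
  proof (cases "length P = 1")
    case True
    then show ?thesis using P backtrack by (cases P) auto
  next
    case False
    then have "P ! 1 = w" "2 \<le> length P" using backtrack P(2) by (auto simp: nth_append)
    then have "d w t \<le> length P - 2"
      using dist_nth_le[OF P(1), of 1 "length P - 1"] is_walk_nth_last[OF P(1)] P(4)
      by (simp add: numeral_2_eq_2)
    then show ?thesis using P(2) same w by simp
  qed
qed

text \<open>In a tree an edge separates the vertices closer to one of its ends from those closer
  to the other, so every walk between the two sides passes through the edge.\<close>

lemma dist_through_edge: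
  assumes st: "E s t" and u: "d u s < d u t" and v: "d v t < d v s"
  shows "d u t + d t v \<le> d u v"
proof -
  obtain P where P: "is_walk E P" "length P = Suc (d u v)" "hd P = u" "last P = v"
    by (rule shortest_walk_exists)
  define side where "side i \<longleftrightarrow> d (P ! i) s < d (P ! i) t" for i
  have "side 0" "\<not> side (length P - 1)"
    using P u v is_walk_nth_0[OF P(1)] is_walk_nth_last[OF P(1)] by (auto simp: side_def)
  then obtain i where i: "i < length P - 1" "side i" "\<not> side (Suc i)"
    using ex_least_nat_less[of "\<lambda>i. \<not> side i"] by blast
  have "d (P ! Suc i) t < d (P ! Suc i) s"
    using i(3) dist_edge_cases[OF st, of "P ! Suc i"] by (auto simp: side_def)
  then have t: "P ! Suc i = t"
    using edge_between_sides_unique[OF st is_walk_nth_edge[OF P(1)]] i by (auto simp: side_def)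
  have "d u t \<le> Suc i"
    using dist_nth_le[OF P(1), of 0 "Suc i"] is_walk_nth_0[OF P(1)] P(3) i t by simp
  moreover have "d t v \<le> length P - 1 - Suc i"
    using dist_nth_le[OF P(1), of "Suc i" "length P - 1"] is_walk_nth_last[OF P(1)] P(4) i t
    by simp
  ultimately show ?thesis using P(2) i(1) by simp
qed

end

section \<open>Distances along a geodesic\<close>

locale tree_geodesic = tree +
  fixes x y :: 'a and xs :: "'a list"
  assumes geodesic: "is_geodesic E x y xs"
begin

definition m where "m = length xs - 1"

lemma geodesic_walk: "is_walk E xs"
  using geodesic by (simp add: is_geodesic_def)

lemma length_geodesic: "length xs = Suc m"
  using geodesic by (simp add: is_geodesic_def m_def)

lemma geodesic_0: "xs ! 0 = x"
  using geodesic is_walk_nth_0[OF geodesic_walk] by (simp add: is_geodesic_def)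

lemma geodesic_m: "xs ! m = y"
  using geodesic is_walk_nth_last[OF geodesic_walk] by (simp add: is_geodesic_def m_def)

lemma geodesic_edge: "i < m \<Longrightarrow> E (xs ! i) (xs ! Suc i)"
  using is_walk_nth_edge[OF geodesic_walk] length_geodesic by simp

lemma dist_geodesic:
  assumes "i \<le> j" "j \<le> m"
  shows "d (xs ! i) (xs ! j) = j - i"
proof -
  have "d (xs ! i) (xs ! j) \<le> j - i"
    using dist_nth_le[OF geodesic_walk, of i j] assms length_geodesic by simp
  moreover have "d x (xs ! i) \<le> i"
    using dist_nth_le[OF geodesic_walk, of 0 i] assms length_geodesic geodesic_0 by simp
  moreover have "d (xs ! j) y \<le> m - j"
    using dist_nth_le[OF geodesic_walk, of j m] assms length_geodesic geodesic_m by simp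
  moreover have "m \<le> d x (xs ! i) + d (xs ! i) (xs ! j) + d (xs ! j) y"
    using dist_triangle[of x y "xs ! i"] dist_triangle[of "xs ! i" y "xs ! j"] geodesic
    by (simp add: is_geodesic_def m_def)
  ultimately show ?thesis using assms by linarith
qed

text \<open>Along the geodesic the distance to a fixed vertex c changes by one at each step;
  it first decreases and, from the first step where it grows (c is receding), keeps growing.\<close>

definition receding :: "'a \<Rightarrow> nat \<Rightarrow> bool" where
  "receding c i \<longleftrightarrow> d c (xs ! (i - 1)) < d c (xs ! i)"

lemma dist_receding:
  assumes "0 < i" "i \<le> m"
  shows "receding c i \<Longrightarrow> d c (xs ! i) = Suc (d c (xs ! (i - 1)))"
    and "\<not> receding c i \<Longrightarrow> d c (xs ! (i - 1)) = Suc (d c (xs ! i))"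
  using dist_edge_cases[OF geodesic_edge[of "i - 1"], of c] assms
  by (auto simp: receding_def)

lemma dist_through_geodesic:
  assumes "0 < i" "i \<le> m" "receding u i" "\<not> receding v i"
  shows "d u (xs ! i) + d (xs ! i) v \<le> d u v"
  using dist_through_edge[OF geodesic_edge[of "i - 1"], of u v] dist_receding(2)[of i v] assms
  by (auto simp: receding_def)

lemma receding_Suc:
  assumes "receding c i" "0 < i" "i < m"
  shows "receding c (Suc i)"
proof -
  have "\<not> receding (xs ! Suc i) i"
    using dist_geodesic[of "i - 1" "Suc i"] dist_geodesic[of i "Suc i"] assms
    by (simp add: receding_def dist_sym)
  then have "d c (xs ! i) + 1 \<le> d c (xs ! Suc i)"
    using dist_through_geodesic[of i c "xs ! Suc i"] dist_geodesic[of i "Suc i"] assms by simp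
  then show ?thesis by (simp add: receding_def)
qed

lemma receding_onwards:
  assumes "receding c i" "0 < i" "i \<le> j" "j \<le> m"
  shows "receding c j \<and> d c (xs ! j) = d c (xs ! i) + (j - i)"
  using assms(3,4)
proof (induction j)
  case (Suc j)
  show ?case
  proof (cases "i = Suc j")
    case False
    then have j: "i \<le> j" "j < m" using Suc.prems by auto
    then have "receding c j \<and> d c (xs ! j) = d c (xs ! i) + (j - i)" using Suc by simp
    moreover from this have "receding c (Suc j)" using receding_Suc[of c j] j assms(2) by simp
    ultimately show ?thesis using dist_receding(1)[of "Suc j" c] Suc.prems j by simp
  qed (use assms in simp)
qed (use assms in simp)

lemma receding_if_dist_less:
  assumes "j < i" "i \<le> m" "d c (xs ! j) < d c (xs ! i)"
  shows "receding c i"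
proof (rule ccontr)
  assume not_receding: "\<not> receding c i"
  have "d c (xs ! i) \<le> d c (xs ! j)"
    using less_imp_le[OF assms(1)]
  proof (induction j rule: inc_induct)
    case (step n)
    have "\<not> receding c (Suc n)"
      using receding_onwards[of c "Suc n" i] not_receding step.hyps assms(2) by auto
    then have "d c (xs ! n) = Suc (d c (xs ! Suc n))"
      using dist_receding(2)[of "Suc n" c] step.hyps assms(2) by simp
    then show ?case using step.IH by simp
  qed simp
  then show False using assms(3) by simp
qed

end

locale geodesic_balls = tree_geodesic +
  fixes k :: nat
begin

abbreviation B where "B w \<equiv> ball_k E k w"

lemma receding_outside_ball:
  assumes "0 < i" "i \<le> m" "receding v i" "v \<notin> B (xs ! i)"
  shows "v \<notin> B y"
  using receding_onwards[OF assms(3,1), of m] assms geodesic_m by (simp add: mem_ball_k)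

definition crossing :: "'a \<Rightarrow> nat" where
  "crossing c = Suc (Max {i. i < length xs \<and> c \<in> B (xs ! i)})"

lemma cross_idx_eq_crossing: "cross_idx E k xs cs j = crossing (cs ! (j - 1))"
  by (simp add: cross_idx_def crossing_def)

lemma
  assumes "i0 \<le> m" "c \<in> B (xs ! i0)" "c \<notin> B y"
  shows crossing_gt: "i0 < crossing c"
    and crossing_le: "crossing c \<le> m"
    and receding_crossing: "receding c (crossing c)"
    and sphere_crossing: "c \<in> sphere_k E k (xs ! crossing c)"
proof -
  let ?I = "{i. i < length xs \<and> c \<in> B (xs ! i)}"
  have fin: "finite ?I" by simp
  have i0: "i0 \<in> ?I" using assms(1,2) length_geodesic by simp
  then have max_in: "Max ?I \<in> ?I" and "i0 \<le> Max ?I"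
    using Max_in[OF fin] Max_ge[OF fin] by blast+
  then show gt: "i0 < crossing c" by (simp add: crossing_def)
  have "Max ?I \<noteq> m" using max_in assms(3) geodesic_m by auto
  then show le: "crossing c \<le> m" using max_in length_geodesic by (simp add: crossing_def)
  have in_prev: "d c (xs ! (crossing c - 1)) \<le> k"
    using max_in by (simp add: crossing_def mem_ball_k)
  have "crossing c \<notin> ?I"
  proof
    assume "crossing c \<in> ?I"
    then have "crossing c \<le> Max ?I" by (rule Max_ge[OF fin])
    then show False by (simp add: crossing_def)
  qed
  then have out: "\<not> d c (xs ! crossing c) \<le> k"
    using le length_geodesic by (simp add: mem_ball_k)
  show "receding c (crossing c)" using in_prev out by (simp add: receding_def)
  then show "c \<in> sphere_k E k (xs ! crossing c)"
    using dist_receding(1)[of "crossing c" c] gt le in_prev out by (simp add: mem_sphere_k)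
qed

lemma
  assumes "i' < i" "i \<le> m" "c \<in> B (xs ! i')" "c \<in> sphere_k E k (xs ! i)"
  shows crossing_eqI: "crossing c = i" and sphere_outside_ball: "c \<notin> B y"
proof -
  let ?I = "{i. i < length xs \<and> c \<in> B (xs ! i)}"
  have receding: "receding c i"
    using receding_if_dist_less[of i' i c] assms by (simp add: mem_ball_k mem_sphere_k)
  then show "c \<notin> B y"
    using receding_outside_ball[of i c] assms by (simp add: mem_ball_k mem_sphere_k)
  have "i - 1 \<in> ?I"
    using dist_receding(1)[of i c] receding assms length_geodesic
    by (simp add: mem_ball_k mem_sphere_k)
  moreover have "j \<le> i - 1" if "j \<in> ?I" for j
  proof (rule ccontr)
    assume "\<not> j \<le> i - 1"
    then have "d c (xs ! j) = d c (xs ! i) + (j - i)"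
      using receding_onwards[OF receding, of j] that assms length_geodesic by simp
    then show False using that assms by (simp add: mem_ball_k mem_sphere_k)
  qed
  ultimately have "Max ?I = i - 1" by (intro Max_eqI) auto
  then show "crossing c = i" using assms by (simp add: crossing_def)
qed

end

section \<open>Weights of restricted walks\<close>

locale stochastic_kernel =
  fixes p :: "'a \<Rightarrow> 'a \<Rightarrow> real"
  assumes nonneg: "0 \<le> p u v"
    and stochastic: "(p u has_sum 1) UNIV"
    and finite_support: "finite {v. p u v \<noteq> 0}"
begin

definition support :: "'a \<Rightarrow> 'a set" where
  "support u = {v. p u v \<noteq> 0}"

lemma sum_support: "(\<Sum>v\<in>support u. p u v) = 1"
proof -
  have "infsum (p u) UNIV = infsum (p u) (support u)"
    by (rule infsum_cong_neutral) (auto simp: support_def)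
  then show ?thesis
    using infsumI[OF stochastic] finite_support by (simp add: support_def)
qed

definition weight :: "nat \<Rightarrow> 'a list \<Rightarrow> real" where
  "weight n ws = (\<Prod>i<n. p (ws ! i) (ws ! Suc i))"

definition pos_walks :: "nat \<Rightarrow> 'a \<Rightarrow> 'a list set" where
  "pos_walks n a = {ws. length ws = Suc n \<and> ws ! 0 = a \<and> (\<forall>i<n. p (ws ! i) (ws ! Suc i) \<noteq> 0)}"

lemma pos_walks_0: "pos_walks 0 a = {[a]}"
  unfolding pos_walks_def by (auto simp: length_Suc_conv)

lemma pos_walks_Suc: "pos_walks (Suc n) a = (\<lambda>(v, ws). a # ws) ` (SIGMA v:support a. pos_walks n v)"
proof
  show "pos_walks (Suc n) a \<subseteq> (\<lambda>(v, ws). a # ws) ` (SIGMA v:support a. pos_walks n v)"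
  proof
    fix ws assume ws: "ws \<in> pos_walks (Suc n) a"
    then obtain ws' where ws': "ws = a # ws'" "length ws' = Suc n"
      unfolding pos_walks_def by (cases ws) auto
    have "p a (ws' ! 0) \<noteq> 0" "\<forall>i<n. p (ws' ! i) (ws' ! Suc i) \<noteq> 0"
      using ws ws' unfolding pos_walks_def by (simp_all add: All_less_Suc2)
    then show "ws \<in> (\<lambda>(v, ws). a # ws) ` (SIGMA v:support a. pos_walks n v)"
      using ws' by (intro image_eqI[of _ _ "(ws' ! 0, ws')"]) (auto simp: pos_walks_def support_def)
  qed
next
  show "(\<lambda>(v, ws). a # ws) ` (SIGMA v:support a. pos_walks n v) \<subseteq> pos_walks (Suc n) a"
    by (auto simp: pos_walks_def support_def All_less_Suc2)
qed

lemma finite_pos_walks: "finite (pos_walks n a)"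
  by (induction n arbitrary: a)
    (auto simp: pos_walks_0 pos_walks_Suc support_def finite_support intro!: finite_SigmaI)

lemma sum_pos_walks_Suc:
  "(\<Sum>ws\<in>{ws \<in> pos_walks (Suc n) a. P ws}. weight (Suc n) ws) =
   (\<Sum>v\<in>support a. p a v * (\<Sum>ws\<in>{ws \<in> pos_walks n v. P (a # ws)}. weight n ws))"
proof -
  let ?cons = "\<lambda>(v::'a, ws). a # ws"
  let ?A = "SIGMA v:support a. {ws \<in> pos_walks n v. P (a # ws)}"
  have "{ws \<in> pos_walks (Suc n) a. P ws} = ?cons ` ?A"
    unfolding pos_walks_Suc by auto
  moreover have "inj_on ?cons ?A"
    by (rule inj_onI) (auto simp: pos_walks_def)
  ultimately have "(\<Sum>ws\<in>{ws \<in> pos_walks (Suc n) a. P ws}. weight (Suc n) ws) =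
      (\<Sum>x\<in>?A. weight (Suc n) (?cons x))"
    by (simp add: sum.reindex)
  also have "\<dots> = (\<Sum>(v, ws)\<in>?A. p a v * weight n ws)"
  proof (rule sum.cong[OF refl], clarify)
    fix v ws assume "v \<in> support a" "ws \<in> pos_walks n v" "P (a # ws)"
    then show "weight (Suc n) (a # ws) = p a v * weight n ws"
      by (simp only: weight_def prod.lessThan_Suc_shift) (simp add: pos_walks_def)
  qed
  also have "\<dots> = (\<Sum>v\<in>support a. p a v * (\<Sum>ws\<in>{ws \<in> pos_walks n v. P (a # ws)}. weight n ws))"
    by (subst sum.Sigma[symmetric])
      (auto simp: finite_support support_def finite_pos_walks sum_distrib_left)
  finally show ?thesis .
qed

lemma pres_eq_sum_pos_walks:
  "pres p \<Omega> n a c =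
     (\<Sum>ws\<in>{ws \<in> pos_walks n a. ws ! n = c \<and> (\<forall>i. 0 < i \<and> i < n \<longrightarrow> ws ! i \<in> \<Omega>)}. weight n ws)"
proof -
  let ?walks = "{ws. length ws = Suc n \<and> ws ! 0 = a \<and> ws ! n = c \<and>
    (\<forall>i. 0 < i \<and> i < n \<longrightarrow> ws ! i \<in> \<Omega>)}"
  let ?pos_walks = "{ws \<in> pos_walks n a. ws ! n = c \<and> (\<forall>i. 0 < i \<and> i < n \<longrightarrow> ws ! i \<in> \<Omega>)}"
  have "pres p \<Omega> n a c = infsum (weight n) ?walks" unfolding pres_def weight_def by simp
  also have "\<dots> = infsum (weight n) ?pos_walks"
    by (rule infsum_cong_neutral) (auto simp: pos_walks_def weight_def)
  also have "\<dots> = sum (weight n) ?pos_walks"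
    using finite_pos_walks by simp
  finally show ?thesis .
qed

lemma weight_nonneg: "0 \<le> weight n ws"
  unfolding weight_def using nonneg by (simp add: prod_nonneg)

lemma pres_nonneg: "0 \<le> pres p \<Omega> n a c"
  unfolding pres_eq_sum_pos_walks using weight_nonneg by (simp add: sum_nonneg)

lemma sum_weight_pos_walks: "(\<Sum>ws\<in>pos_walks n a. weight n ws) = 1"
proof (induction n arbitrary: a)
  case 0
  then show ?case by (simp add: pos_walks_0 weight_def)
next
  case (Suc n)
  show ?case
    using sum_pos_walks_Suc[of n a "\<lambda>_. True"] Suc sum_support by simp
qed

lemma pres_le_1: "pres p \<Omega> n a c \<le> 1"
proof -
  have "pres p \<Omega> n a c \<le> (\<Sum>ws\<in>pos_walks n a. weight n ws)"
    unfolding pres_eq_sum_pos_walks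
    by (rule sum_mono2[OF finite_pos_walks]) (auto simp: weight_nonneg)
  then show ?thesis using sum_weight_pos_walks by simp
qed

lemma pres_0: "pres p \<Omega> 0 a c = of_bool (a = c)"
proof -
  have "{ws \<in> pos_walks 0 a. ws ! 0 = c \<and> (\<forall>i. 0 < i \<and> i < 0 \<longrightarrow> ws ! i \<in> \<Omega>)} =
      (if a = c then {[a]} else {})"
    by (auto simp: pos_walks_0)
  then show ?thesis by (simp add: pres_eq_sum_pos_walks weight_def)
qed

text \<open>The weight of walks whose starting vertex must lie in \<Omega> as well, unless the walk
  is trivial; this is what remains of a walk after its first step.\<close>

definition pres_tail :: "'a set \<Rightarrow> nat \<Rightarrow> 'a \<Rightarrow> 'a \<Rightarrow> real" where
  "pres_tail \<Omega> n v c = (if n = 0 \<or> v \<in> \<Omega> then pres p \<Omega> n v c else 0)"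

lemma pres_tail_in: "v \<in> \<Omega> \<Longrightarrow> pres_tail \<Omega> n v c = pres p \<Omega> n v c"
  by (simp add: pres_tail_def)

lemma pres_tail_notin: "v \<notin> \<Omega> \<Longrightarrow> pres_tail \<Omega> n v c = of_bool (n = 0 \<and> v = c)"
  by (simp add: pres_tail_def pres_0)

lemma pres_Suc: "pres p \<Omega> (Suc n) a c = (\<Sum>v\<in>support a. p a v * pres_tail \<Omega> n v c)"
proof -
  let ?P = "\<lambda>ws. ws ! Suc n = c \<and> (\<forall>i. 0 < i \<and> i < Suc n \<longrightarrow> ws ! i \<in> \<Omega>)"
  have "(\<forall>i. 0 < i \<and> i < Suc n \<longrightarrow> (a # ws) ! i \<in> \<Omega>) \<longleftrightarrow> (\<forall>j<n. ws ! j \<in> \<Omega>)" for ws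
    by (metis Suc_less_eq gr0_conv_Suc nth_Cons_Suc zero_less_Suc)
  then have shift: "?P (a # ws) \<longleftrightarrow> ws ! n = c \<and> (\<forall>j<n. ws ! j \<in> \<Omega>)" for ws
    by (simp only: nth_Cons_Suc)
  have "(\<forall>j<n. ws ! j \<in> \<Omega>) \<longleftrightarrow> (n = 0 \<or> v \<in> \<Omega>) \<and> (\<forall>i. 0 < i \<and> i < n \<longrightarrow> ws ! i \<in> \<Omega>)"
    if "ws ! 0 = v" for ws v
    using that by (metis bot_nat_0.not_eq_extremum gr_zeroI less_nat_zero_code)
  then have sets: "{ws \<in> pos_walks n v. ?P (a # ws)} =
      (if n = 0 \<or> v \<in> \<Omega> then {ws \<in> pos_walks n v. ws ! n = c \<and> (\<forall>i. 0 < i \<and> i < n \<longrightarrow> ws ! i \<in> \<Omega>)}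
       else {})" for v
    unfolding shift by (auto simp: pos_walks_def)
  have "pres p \<Omega> (Suc n) a c = (\<Sum>ws\<in>{ws \<in> pos_walks (Suc n) a. ?P ws}. weight (Suc n) ws)"
    unfolding pres_eq_sum_pos_walks ..
  also have "\<dots> = (\<Sum>v\<in>support a. p a v * (\<Sum>ws\<in>{ws \<in> pos_walks n v. ?P (a # ws)}. weight n ws))"
    by (rule sum_pos_walks_Suc)
  also have "\<dots> = (\<Sum>v\<in>support a. p a v * pres_tail \<Omega> n v c)"
    unfolding sets pres_tail_def pres_eq_sum_pos_walks by (intro sum.cong) auto
  finally show ?thesis .
qed

lemma summable_green_norm:
  assumes "norm z < 1"
  shows "summable (\<lambda>n. norm (complex_of_real (pres p \<Omega> n a c) * z ^ n))"
proof (rule summable_comparison_test)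
  show "\<exists>N. \<forall>n\<ge>N. norm (norm (complex_of_real (pres p \<Omega> n a c) * z ^ n)) \<le> norm z ^ n"
    using pres_nonneg pres_le_1
    by (auto simp: norm_mult norm_power intro!: mult_left_le_one_le)
  show "summable (\<lambda>n. norm z ^ n)" using assms by (simp add: summable_geometric)
qed

lemma green_eq_0:
  assumes "\<And>n. \<not> 0 < pres p \<Omega> n a c"
  shows "green p z a c \<Omega> = 0"
proof -
  have "pres p \<Omega> n a c = 0" for n using assms[of n] pres_nonneg[of \<Omega> n a c] by linarith
  then show ?thesis by (simp add: green_def)
qed

lemma sum_support_convolution:
  "(\<Sum>v\<in>support a. p a v * (\<Sum>c\<in>C. \<Sum>t\<le>n. pres_tail \<Omega> t v c * f t c)) =
   (\<Sum>c\<in>C. \<Sum>t\<le>n. pres p \<Omega> (Suc t) a c * f t c)"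
proof -
  have "(\<Sum>v\<in>support a. p a v * (\<Sum>c\<in>C. \<Sum>t\<le>n. pres_tail \<Omega> t v c * f t c)) =
      (\<Sum>c\<in>C. \<Sum>t\<le>n. \<Sum>v\<in>support a. p a v * pres_tail \<Omega> t v c * f t c)"
    by (simp add: sum_distrib_left mult.assoc) (subst sum.swap, subst (2) sum.swap, rule refl)
  then show ?thesis by (simp add: pres_Suc sum_distrib_right)
qed

lemma pres_tail_entrance_inside:
  assumes "finite U" "v \<in> U" "b \<notin> \<Omega>"
  shows "pres_tail \<Omega> n v b = (if b \<in> U then pres_tail (- U) n v b else 0) +
    (\<Sum>c\<in>U \<inter> \<Omega>. \<Sum>t\<le>n. pres_tail (- U) t v c * pres p \<Omega> (n - t) c b)"
proof -
  have "(\<Sum>t\<le>n. pres_tail (- U) t v c * pres p \<Omega> (n - t) c b) =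
      (if v = c then pres p \<Omega> n c b else 0)" for c
    using assms by (subst sum.atMost_shift) (simp add: pres_tail_notin)
  then have "(\<Sum>c\<in>U \<inter> \<Omega>. \<Sum>t\<le>n. pres_tail (- U) t v c * pres p \<Omega> (n - t) c b) =
      (if v \<in> \<Omega> then pres p \<Omega> n v b else 0)"
    using assms by (simp add: sum.delta)
  moreover have "pres_tail (- U) n v b = of_bool (n = 0 \<and> v = b)"
    using assms by (simp add: pres_tail_notin)
  moreover have "pres_tail \<Omega> n v b = (if v \<in> \<Omega> then pres p \<Omega> n v b else of_bool (n = 0 \<and> v = b))"
    by (simp add: pres_tail_def pres_0)
  ultimately show ?thesis using assms by auto
qed

text \<open>First-entrance decomposition: a walk from I, which can only be left into U, reaches
  b \<notin> \<Omega> either before entering U or after entering U for the first time, after t steps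
  at some c \<in> U \<inter> \<Omega>.\<close>

lemma pres_first_entrance:
  assumes U: "finite U" and b: "b \<notin> \<Omega>" and I: "I \<subseteq> \<Omega> - U" and a: "a \<in> I"
    and closed: "\<And>u v. u \<in> I \<Longrightarrow> p u v \<noteq> 0 \<Longrightarrow> v \<notin> U \<Longrightarrow> v \<in> I"
  shows "pres p \<Omega> n a b = (if b \<in> U then pres p (- U) n a b else 0) +
    (\<Sum>c\<in>U \<inter> \<Omega>. \<Sum>t\<le>n. pres p (- U) t a c * pres p \<Omega> (n - t) c b)"
  using a
proof (induction n arbitrary: a)
  case 0
  then show ?case using I b by (auto simp: pres_0 intro!: sum.neutral)
next
  case (Suc n)
  let ?C = "U \<inter> \<Omega>"
  have step: "pres_tail \<Omega> n v b = (if b \<in> U then pres_tail (- U) n v b else 0) +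
      (\<Sum>c\<in>?C. \<Sum>t\<le>n. pres_tail (- U) t v c * pres p \<Omega> (n - t) c b)"
    if v: "v \<in> support a" for v
  proof (cases "v \<in> U")
    case True
    then show ?thesis using pres_tail_entrance_inside U b by blast
  next
    case False
    then have "v \<in> I" using closed Suc.prems v by (auto simp: support_def)
    then show ?thesis using Suc.IH[of v] I False by (auto simp: pres_tail_in)
  qed
  have shift: "(\<Sum>t\<le>n. pres p (- U) (Suc t) a c * pres p \<Omega> (Suc n - Suc t) c b) =
      (\<Sum>t\<le>Suc n. pres p (- U) t a c * pres p \<Omega> (Suc n - t) c b)" if "c \<in> ?C" for c
  proof -
    have "pres p (- U) 0 a c = 0" using that Suc.prems I by (auto simp: pres_0)
    then show ?thesis by (simp only: sum.atMost_Suc_shift)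
  qed
  have "pres p \<Omega> (Suc n) a b = (\<Sum>v\<in>support a. p a v * pres_tail \<Omega> n v b)"
    by (rule pres_Suc)
  also have "\<dots> = (\<Sum>v\<in>support a. p a v * ((if b \<in> U then pres_tail (- U) n v b else 0) +
      (\<Sum>c\<in>?C. \<Sum>t\<le>n. pres_tail (- U) t v c * pres p \<Omega> (n - t) c b)))"
    by (rule sum.cong[OF refl]) (simp only: step)
  also have "\<dots> = (if b \<in> U then (\<Sum>v\<in>support a. p a v * pres_tail (- U) n v b) else 0) +
      (\<Sum>v\<in>support a. p a v * (\<Sum>c\<in>?C. \<Sum>t\<le>n. pres_tail (- U) t v c * pres p \<Omega> (n - t) c b))"
    by (cases "b \<in> U") (simp_all only: distrib_left sum.distrib if_True if_False add_0)
  also have "\<dots> = (if b \<in> U then pres p (- U) (Suc n) a b else 0) +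
      (\<Sum>c\<in>?C. \<Sum>t\<le>n. pres p (- U) (Suc t) a c * pres p \<Omega> (Suc n - Suc t) c b)"
    by (simp only: sum_support_convolution pres_Suc[symmetric] diff_Suc_Suc)
  also have "(\<Sum>c\<in>?C. \<Sum>t\<le>n. pres p (- U) (Suc t) a c * pres p \<Omega> (Suc n - Suc t) c b) =
      (\<Sum>c\<in>?C. \<Sum>t\<le>Suc n. pres p (- U) t a c * pres p \<Omega> (Suc n - t) c b)"
    by (rule sum.cong[OF refl]) (rule shift)
  finally show ?case .
qed

lemma green_sums:
  assumes "norm z < 1"
  shows "(\<lambda>n. complex_of_real (pres p \<Omega> n a c) * z ^ n) sums green p z a c \<Omega>"
  unfolding green_def
  by (rule summable_sums[OF summable_norm_cancel[OF summable_green_norm[OF assms]]])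

lemma green_mult_sums:
  assumes "norm z < 1"
  shows "(\<lambda>n. complex_of_real (\<Sum>t\<le>n. pres p \<Omega> t a c * pres p \<Omega>' (n - t) c b) * z ^ n) sums
    (green p z a c \<Omega> * green p z c b \<Omega>')"
proof -
  have eq: "(\<Sum>t\<le>n. complex_of_real (pres p \<Omega> t a c) * z ^ t *
      (complex_of_real (pres p \<Omega>' (n - t) c b) * z ^ (n - t))) =
    complex_of_real (\<Sum>t\<le>n. pres p \<Omega> t a c * pres p \<Omega>' (n - t) c b) * z ^ n" for n
    unfolding of_real_sum sum_distrib_right
    by (intro sum.cong refl) (auto simp: power_add[symmetric] mult_ac)
  from Cauchy_product_sums[OF summable_green_norm[OF assms, where \<Omega> = \<Omega> and a = a and c = c]
      summable_green_norm[OF assms, where \<Omega> = \<Omega>' and a = c and c = b]]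
  show ?thesis unfolding eq green_def .
qed

lemma green_first_entrance:
  assumes U: "finite U" and b: "b \<notin> \<Omega>" and I: "I \<subseteq> \<Omega> - U" and a: "a \<in> I"
    and closed: "\<And>u v. u \<in> I \<Longrightarrow> p u v \<noteq> 0 \<Longrightarrow> v \<notin> U \<Longrightarrow> v \<in> I"
    and z: "norm z < 1"
  shows "green p z a b \<Omega> = (if b \<in> U then green p z a b (- U) else 0) +
    (\<Sum>c\<in>U \<inter> \<Omega>. green p z a c (- U) * green p z c b \<Omega>)"
proof -
  have coefficient: "complex_of_real (pres p \<Omega> n a b) * z ^ n =
      (if b \<in> U then complex_of_real (pres p (- U) n a b) * z ^ n else 0) +
      (\<Sum>c\<in>U \<inter> \<Omega>. complex_of_real (\<Sum>t\<le>n. pres p (- U) t a c * pres p \<Omega> (n - t) c b) * z ^ n)"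
    for n
    using pres_first_entrance[OF U b I a closed, where n = n]
    by (simp add: distrib_right sum_distrib_right)
  have "(\<lambda>n. complex_of_real (pres p \<Omega> n a b) * z ^ n) sums
    ((if b \<in> U then green p z a b (- U) else 0) +
      (\<Sum>c\<in>U \<inter> \<Omega>. green p z a c (- U) * green p z c b \<Omega>))"
    unfolding coefficient using green_sums[OF z] green_mult_sums[OF z]
    by (intro sums_add sums_sum) auto
  then show ?thesis unfolding green_def by (rule sums_unique[symmetric])
qed

end

section \<open>Chains of first entrances\<close>

locale tree_walk = stochastic_kernel p + geodesic_balls E x y xs k
  for p :: "'a \<Rightarrow> 'a \<Rightarrow> real" and E :: "'a \<Rightarrow> 'a \<Rightarrow> bool" and x y xs k +
  assumes bounded_valence: "bounded_valence E"
    and range: "k < d u v \<Longrightarrow> p u v = 0"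
begin

lemma finite_ball: "finite (B w)"
  using finite_dist_le[OF bounded_valence] by (simp add: ball_k_def)

lemma green_first_crossing:
  assumes "0 < i" "i \<le> m" "b \<in> B y" "c \<notin> B (xs ! i)" "receding c i" "norm z < 1"
  shows "green p z c b (- B y) = (if b \<in> B (xs ! i) then green p z c b (- B (xs ! i)) else 0) +
    (\<Sum>c'\<in>B (xs ! i) - B y. green p z c c' (- B (xs ! i)) * green p z c' b (- B y))"
proof -
  let ?I = "{v. v \<notin> B (xs ! i) \<and> receding v i}"
  have "?I \<subseteq> - B y - B (xs ! i)" using receding_outside_ball assms(1,2) by auto
  moreover have "v \<in> ?I" if "u \<in> ?I" "p u v \<noteq> 0" "v \<notin> B (xs ! i)" for u v
  proof -
    have "d u v \<le> k" using range that(2) by (meson not_le)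
    moreover have "k < d u (xs ! i)" using that(1) by (simp add: mem_ball_k)
    ultimately have "receding v i"
      using dist_through_geodesic[of i u v] that(1) assms(1,2) by fastforce
    then show ?thesis using that(3) by simp
  qed
  ultimately show ?thesis
    using green_first_entrance[of "B (xs ! i)" b "- B y" ?I c z] finite_ball assms
    by (simp add: Diff_eq)
qed

lemma crossing_induct [consumes 3, case_names step]:
  assumes "i0 \<le> m" "c \<in> B (xs ! i0)" "c \<notin> B y"
    and step: "\<And>c i0. i0 \<le> m \<Longrightarrow> c \<in> B (xs ! i0) \<Longrightarrow> c \<notin> B y \<Longrightarrow>
      (\<And>c'. c' \<in> B (xs ! crossing c) \<Longrightarrow> c' \<notin> B y \<Longrightarrow> P c') \<Longrightarrow> P c"
  shows "P c"
  using assms(1-3)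
proof (induction "m - crossing c" arbitrary: c i0 rule: less_induct)
  case less
  show ?case
  proof (rule step[OF less.prems])
    fix c' assume c': "c' \<in> B (xs ! crossing c)" "c' \<notin> B y"
    have "crossing c < crossing c'" "crossing c' \<le> m"
      using crossing_gt[OF _ c'] crossing_le[OF _ c'] crossing_le[OF less.prems] by auto
    then show "P c'" using less.hyps[of c' "crossing c"] crossing_le[OF less.prems] c' by auto
  qed
qed

text \<open>The elements of \<open>Xi_geo\<close> from c to b, described through their crossing indices
  i_j = crossing c_(j-1) instead of an explicit list of indices.\<close>

definition link :: "'a \<Rightarrow> 'a \<Rightarrow> bool" where
  "link u v \<longleftrightarrow> u \<notin> B y \<and> (u, v) \<in> Xi_w E k p (xs ! crossing u)"

definition chains :: "'a \<Rightarrow> 'a \<Rightarrow> 'a list set" where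
  "chains c b = {cs. 2 \<le> length cs \<and> hd cs = c \<and> last cs = b \<and> successively link cs}"

lemma link_imp_ball: "link u v \<Longrightarrow> v \<in> B (xs ! crossing u)"
  by (simp add: link_def Xi_w_def)

lemma chains_unfold:
  "chains c b = (if link c b then {[c, b]} else {}) \<union>
     (\<Union>c'\<in>{c'. link c c' \<and> c' \<notin> B y}. (#) c ` chains c' b)"
proof (intro equalityI subsetI)
  fix cs assume chain: "cs \<in> chains c b"
  then obtain cs' where "cs = c # cs'" unfolding chains_def by (cases cs) auto
  with chain have cs: "cs = c # cs'" "cs' \<noteq> []" "last cs' = b"
    "link c (hd cs')" "successively link cs'"
    unfolding chains_def by (auto simp: successively_Cons)
  show "cs \<in> (if link c b then {[c, b]} else {}) \<union>
      (\<Union>c'\<in>{c'. link c c' \<and> c' \<notin> B y}. (#) c ` chains c' b)"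
  proof (cases "tl cs' = []")
    case True
    then show ?thesis using cs by (cases cs') auto
  next
    case False
    then have "hd cs' \<notin> B y" using cs by (cases cs') (auto simp: link_def successively_Cons)
    moreover have "cs' \<in> chains (hd cs') b"
      using cs False by (cases cs') (auto simp: chains_def Suc_le_eq)
    ultimately show ?thesis using cs by blast
  qed
qed (auto simp: chains_def successively_Cons split: if_splits)

lemma finite_chains:
  assumes "i0 \<le> m" "c \<in> B (xs ! i0)" "c \<notin> B y"
  shows "finite (chains c b)"
  using assms
proof (induction rule: crossing_induct)
  case (step c i0)
  have "finite {c'. link c c' \<and> c' \<notin> B y}"
    by (rule finite_subset[OF _ finite_ball]) (auto dest: link_imp_ball)
  then show ?case
    using step.IH by (subst chains_unfold) (auto dest: link_imp_ball)
qed

definition chain_weight :: "complex \<Rightarrow> 'a list \<Rightarrow> complex" where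
  "chain_weight z cs = (\<Prod>j\<in>{1..length cs - 1}.
     green p z (cs ! (j - 1)) (cs ! j) (- B (xs ! crossing (cs ! (j - 1)))))"

lemma chain_weight_Cons:
  assumes "cs \<noteq> []"
  shows "chain_weight z (c # cs) = green p z c (hd cs) (- B (xs ! crossing c)) * chain_weight z cs"
proof -
  let ?f = "\<lambda>j. green p z ((c # cs) ! (j - 1)) ((c # cs) ! j)
    (- B (xs ! crossing ((c # cs) ! (j - 1))))"
  have "chain_weight z (c # cs) = prod ?f {1..length cs}"
    unfolding chain_weight_def by simp
  also have "\<dots> = ?f 1 * prod ?f {Suc 1..length cs}"
    using assms by (intro prod.atLeast_Suc_atMost) (simp add: Suc_le_eq)
  also have "prod ?f {Suc 1..length cs} = prod (\<lambda>j. ?f (Suc j)) {1..length cs - 1}"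
    using assms prod.shift_bounds_cl_Suc_ivl[of ?f 1 "length cs - 1"] by simp
  also have "\<dots> = chain_weight z cs"
    unfolding chain_weight_def by (intro prod.cong refl) auto
  finally show ?thesis using assms by (simp add: hd_conv_nth)
qed

lemma sum_chains_unfold:
  assumes fin: "\<And>c'. link c c' \<Longrightarrow> c' \<notin> B y \<Longrightarrow> finite (chains c' b)"
  shows "(\<Sum>cs\<in>chains c b. chain_weight z cs) =
    (if link c b then green p z c b (- B (xs ! crossing c)) else 0) +
    (\<Sum>c'\<in>{c'. link c c' \<and> c' \<notin> B y}.
       green p z c c' (- B (xs ! crossing c)) * (\<Sum>cs\<in>chains c' b. chain_weight z cs))"
proof -
  let ?C = "{c'. link c c' \<and> c' \<notin> B y}"
  have "finite ?C" by (rule finite_subset[OF _ finite_ball]) (auto dest: link_imp_ball)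
  have "finite (\<Union>c'\<in>?C. (#) c ` chains c' b)" using \<open>finite ?C\<close> fin by auto
  moreover have "[c, b] \<notin> (\<Union>c'\<in>?C. (#) c ` chains c' b)" by (auto simp: chains_def)
  ultimately have "(\<Sum>cs\<in>chains c b. chain_weight z cs) =
      (\<Sum>cs\<in>(if link c b then {[c, b]} else {}). chain_weight z cs) +
      (\<Sum>cs\<in>(\<Union>c'\<in>?C. (#) c ` chains c' b). chain_weight z cs)"
    by (subst chains_unfold, intro sum.union_disjoint) auto
  also have "(\<Sum>cs\<in>(\<Union>c'\<in>?C. (#) c ` chains c' b). chain_weight z cs) =
      (\<Sum>c'\<in>?C. \<Sum>cs\<in>(#) c ` chains c' b. chain_weight z cs)"
    using \<open>finite ?C\<close> fin by (intro sum.UNION_disjoint) (auto simp: chains_def)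
  also have "\<dots> = (\<Sum>c'\<in>?C. green p z c c' (- B (xs ! crossing c)) *
      (\<Sum>cs\<in>chains c' b. chain_weight z cs))"
  proof (rule sum.cong[OF refl])
    fix c' assume "c' \<in> ?C"
    have "(\<Sum>cs\<in>(#) c ` chains c' b. chain_weight z cs) = (\<Sum>cs\<in>chains c' b. chain_weight z (c # cs))"
      by (rule sum.reindex_cong[of "(#) c"]) (auto simp: inj_on_def)
    also have "\<dots> = (\<Sum>cs\<in>chains c' b. green p z c c' (- B (xs ! crossing c)) * chain_weight z cs)"
    proof (rule sum.cong[OF refl])
      fix cs assume "cs \<in> chains c' b"
      then have "cs \<noteq> []" "hd cs = c'" by (auto simp: chains_def)
      then show "chain_weight z (c # cs) =
          green p z c c' (- B (xs ! crossing c)) * chain_weight z cs"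
        by (simp add: chain_weight_Cons)
    qed
    finally show "(\<Sum>cs\<in>(#) c ` chains c' b. chain_weight z cs) =
        green p z c c' (- B (xs ! crossing c)) * (\<Sum>cs\<in>chains c' b. chain_weight z cs)"
      by (simp add: sum_distrib_left)
  qed
  finally show ?thesis by (simp add: chain_weight_def)
qed

lemma green_eq_0_unless_link:
  assumes "c \<notin> B y" "c \<in> sphere_k E k (xs ! crossing c)" "c' \<in> B (xs ! crossing c)"
    and "\<not> link c c'"
  shows "green p z c c' (- B (xs ! crossing c)) = 0"
  using assms by (intro green_eq_0) (auto simp: link_def Xi_w_def)

lemma green_eq_sum_chains:
  assumes b: "b \<in> B y" and z: "norm z < 1"
    and c: "i0 \<le> m" "c \<in> B (xs ! i0)" "c \<notin> B y"
  shows "green p z c b (- B y) = (\<Sum>cs\<in>chains c b. chain_weight z cs)"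
  using c
proof (induction rule: crossing_induct)
  case (step c i0)
  let ?i = "crossing c" and ?C = "{c'. link c c' \<and> c' \<notin> B y}"
  note crossing = crossing_gt[OF step.hyps] crossing_le[OF step.hyps]
    receding_crossing[OF step.hyps] sphere_crossing[OF step.hyps]
  then have "c \<notin> B (xs ! ?i)" by (simp add: mem_ball_k mem_sphere_k)
  then have "green p z c b (- B y) =
      (if b \<in> B (xs ! ?i) then green p z c b (- B (xs ! ?i)) else 0) +
      (\<Sum>c'\<in>B (xs ! ?i) - B y. green p z c c' (- B (xs ! ?i)) * green p z c' b (- B y))"
    using green_first_crossing[OF _ _ b _ _ z] crossing by simp
  also have "(if b \<in> B (xs ! ?i) then green p z c b (- B (xs ! ?i)) else 0) =
      (if link c b then green p z c b (- B (xs ! ?i)) else 0)"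
    using green_eq_0_unless_link[of c b] step.hyps crossing by (auto dest: link_imp_ball)
  also have "(\<Sum>c'\<in>B (xs ! ?i) - B y. green p z c c' (- B (xs ! ?i)) * green p z c' b (- B y)) =
      (\<Sum>c'\<in>?C. green p z c c' (- B (xs ! ?i)) * (\<Sum>cs\<in>chains c' b. chain_weight z cs))"
  proof (rule sum.mono_neutral_cong_right)
    show "finite (B (xs ! ?i) - B y)" using finite_ball by simp
    show "?C \<subseteq> B (xs ! ?i) - B y" by (auto dest: link_imp_ball)
    show "\<forall>c'\<in>B (xs ! ?i) - B y - ?C.
        green p z c c' (- B (xs ! ?i)) * green p z c' b (- B y) = 0"
      using green_eq_0_unless_link[of c] step.hyps(3) crossing(4) by auto
    show "green p z c c' (- B (xs ! ?i)) * green p z c' b (- B y) =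
        green p z c c' (- B (xs ! ?i)) * (\<Sum>cs\<in>chains c' b. chain_weight z cs)" if "c' \<in> ?C" for c'
      using step.IH[of c'] that by (auto dest: link_imp_ball)
  qed
  also have "(if link c b then green p z c b (- B (xs ! ?i)) else 0) + \<dots> =
      (\<Sum>cs\<in>chains c b. chain_weight z cs)"
    using finite_chains[OF crossing(2)]
    by (intro sum_chains_unfold[symmetric]) (auto dest: link_imp_ball)
  finally show ?case .
qed

lemma chain_link_nth: "cs \<in> chains a b \<Longrightarrow> Suc j < length cs \<Longrightarrow> link (cs ! j) (cs ! Suc j)"
  by (simp add: chains_def successively_nth)

lemma chain_endpoints: "cs \<in> chains a b \<Longrightarrow> cs ! 0 = a \<and> cs ! (length cs - 1) = b"
  by (cases cs) (auto simp: chains_def last_conv_nth)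

lemma chain_near_geodesic:
  assumes cs: "cs \<in> chains a b" and a: "a \<in> B x" and j: "Suc j < length cs"
  shows "\<exists>i0\<le>m. cs ! j \<in> B (xs ! i0)"
  using j
proof (induction j)
  case 0
  then show ?case using a chain_endpoints[OF cs] geodesic_0 by auto
next
  case (Suc j)
  then obtain i0 where "i0 \<le> m" "cs ! j \<in> B (xs ! i0)" by auto
  moreover have "link (cs ! j) (cs ! Suc j)" using chain_link_nth[OF cs] Suc.prems by simp
  ultimately have "crossing (cs ! j) \<le> m" "cs ! Suc j \<in> B (xs ! crossing (cs ! j))"
    using crossing_le link_imp_ball by (auto simp: link_def)
  then show ?case by blast
qed

lemma
  assumes cs: "cs \<in> chains a b" and a: "a \<in> B x" and j: "Suc j < length cs"
  shows chain_crossing_le: "crossing (cs ! j) \<le> m"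
    and chain_sphere_crossing: "cs ! j \<in> sphere_k E k (xs ! crossing (cs ! j))"
    and chain_crossing_less: "Suc (Suc j) < length cs \<Longrightarrow> crossing (cs ! j) < crossing (cs ! Suc j)"
proof -
  obtain i0 where i0: "i0 \<le> m" "cs ! j \<in> B (xs ! i0)"
    using chain_near_geodesic[OF cs a j] by blast
  have link: "link (cs ! j) (cs ! Suc j)" using chain_link_nth[OF cs j] .
  then show le: "crossing (cs ! j) \<le> m" "cs ! j \<in> sphere_k E k (xs ! crossing (cs ! j))"
    using crossing_le[OF i0] sphere_crossing[OF i0] by (auto simp: link_def)
  assume "Suc (Suc j) < length cs"
  then have "cs ! Suc j \<notin> B y" using chain_link_nth[OF cs] by (simp add: link_def)
  then show "crossing (cs ! j) < crossing (cs ! Suc j)"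
    using crossing_gt[OF le(1) link_imp_ball[OF link]] by blast
qed

lemma chain_crossing_ge:
  assumes cs: "cs \<in> chains a b" and a: "a \<in> B x"
  shows "Suc j < length cs \<Longrightarrow> Suc j \<le> crossing (cs ! j)"
proof (induction j)
  case 0
  then show ?case by (simp add: crossing_def)
next
  case (Suc j)
  then show ?case using chain_crossing_less[OF cs a, of j] by simp
qed

lemma Xi_geo_imp_chain:
  assumes "cs \<in> Xi_geo E k p xs" "cs ! 0 = a" "cs ! (length cs - 1) = b"
  shows "cs \<in> chains a b"
proof -
  define l where "l = length cs - 1"
  obtain ix where l: "0 < l" and ix: "length ix = l" "sorted_wrt (<) ix" "ix ! (l - 1) \<le> m"
    and first: "cs ! 0 \<in> sphere_k E k (xs ! (ix ! 0))"
    and middle: "\<And>j. 1 \<le> j \<Longrightarrow> j \<le> l - 1 \<Longrightarrow>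
      cs ! j \<in> B (xs ! (ix ! (j - 1))) \<inter> sphere_k E k (xs ! (ix ! j))"
    and step: "\<And>j. 1 \<le> j \<Longrightarrow> j \<le> l \<Longrightarrow> (cs ! (j - 1), cs ! j) \<in> Xi_w E k p (xs ! (ix ! (j - 1)))"
    and "cs ! 0 \<in> B (xs ! 0)" "0 < ix ! 0"
    using assms(1) unfolding Xi_geo_def Let_def m_def[symmetric] l_def[symmetric] mem_Collect_eq
    by blast
  have increasing: "ix ! i < ix ! j" if "i < j" "j < l" for i j
    using ix(1,2) that by (simp add: sorted_wrt_iff_nth_less)
  have "link (cs ! j) (cs ! Suc j)" if j: "j < l" for j
  proof -
    define i' where "i' = (if j = 0 then 0 else ix ! (j - 1))"
    have "j = l - 1 \<or> j < l - 1" using j by linarith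
    then have "ix ! j \<le> m" using increasing[of j "l - 1"] ix(3) j by auto
    moreover have "i' < ix ! j \<and> cs ! j \<in> B (xs ! i') \<and> cs ! j \<in> sphere_k E k (xs ! (ix ! j))"
    proof (cases j)
      case 0
      then show ?thesis using first \<open>cs ! 0 \<in> B (xs ! 0)\<close> \<open>0 < ix ! 0\<close> by (simp add: i'_def)
    next
      case (Suc j')
      then show ?thesis using increasing[of j' j] middle[of j] j by (simp add: i'_def)
    qed
    ultimately have "crossing (cs ! j) = ix ! j" "cs ! j \<notin> B y"
      using crossing_eqI sphere_outside_ball by blast+
    then show ?thesis using step[of "Suc j"] j by (simp add: link_def)
  qed
  then have "successively link cs" using l_def by (simp add: successively_conv_nth)
  then show ?thesis
    using assms(2,3) l l_def by (cases cs) (auto simp: chains_def last_conv_nth Suc_le_eq)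
qed

lemma chain_imp_Xi_geo:
  assumes cs: "cs \<in> chains a b" and a: "a \<in> B x" and b: "b \<in> B y"
  shows "cs \<in> Xi_geo E k p xs"
proof -
  define l where "l = length cs - 1"
  define ix where "ix = map (\<lambda>j. crossing (cs ! j)) [0..<l]"
  have l: "0 < l" "length cs = Suc l" using cs by (auto simp: chains_def l_def)
  have ix_nth: "ix ! j = crossing (cs ! j)" if "j < l" for j using that by (simp add: ix_def)
  have last_le: "ix ! (l - 1) \<le> m" using chain_crossing_le[OF cs a, of "l - 1"] l ix_nth by simp
  have link: "link (cs ! j) (cs ! Suc j)" if "j < l" for j
    using chain_link_nth[OF cs] that l by simp
  show ?thesis
    unfolding Xi_geo_def Let_def m_def[symmetric] l_def[symmetric] mem_Collect_eq
  proof (intro conjI exI[of _ ix])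
    show "0 < l" "length ix = l" "0 < ix ! 0" "ix ! (l - 1) \<le> m"
      using l last_le chain_crossing_ge[OF cs a, of 0] by (auto simp: ix_def)
    show "l \<le> m" using chain_crossing_ge[OF cs a, of "l - 1"] last_le l ix_nth by simp
    show "sorted_wrt (<) ix"
      using chain_crossing_less[OF cs a] l
      by (simp add: successively_conv_sorted_wrt[symmetric] successively_conv_nth ix_def)
    show "cs ! 0 \<in> B (xs ! 0) \<inter> sphere_k E k (xs ! (ix ! 0))"
      using a chain_endpoints[OF cs] geodesic_0 chain_sphere_crossing[OF cs a, of 0] l ix_nth
      by auto
    show "\<forall>j. 1 \<le> j \<and> j \<le> l - 1 \<longrightarrow>
        cs ! j \<in> B (xs ! (ix ! (j - 1))) \<inter> sphere_k E k (xs ! (ix ! j))"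
    proof (intro allI impI)
      fix j assume j: "1 \<le> j \<and> j \<le> l - 1"
      then have "Suc (j - 1) = j" "j - 1 < l" "j < l" using l by auto
      then show "cs ! j \<in> B (xs ! (ix ! (j - 1))) \<inter> sphere_k E k (xs ! (ix ! j))"
        using link_imp_ball[OF link[of "j - 1"]] chain_sphere_crossing[OF cs a, of j] l ix_nth
        by simp
    qed
    show "cs ! l \<in> B (xs ! (ix ! (l - 1))) \<inter> B (xs ! m)"
      using link_imp_ball[OF link, of "l - 1"] chain_endpoints[OF cs] b geodesic_m l ix_nth
      by auto
    show "\<forall>j. 1 \<le> j \<and> j \<le> l \<longrightarrow> (cs ! (j - 1), cs ! j) \<in> Xi_w E k p (xs ! (ix ! (j - 1)))"
    proof (intro allI impI)
      fix j assume "1 \<le> j \<and> j \<le> l"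
      then have "Suc (j - 1) = j" "j - 1 < l" by auto
      then show "(cs ! (j - 1), cs ! j) \<in> Xi_w E k p (xs ! (ix ! (j - 1)))"
        using link[of "j - 1"] ix_nth by (simp add: link_def)
    qed
  qed
qed

end

theorem proposition3p22:
  fixes E :: "'a \<Rightarrow> 'a \<Rightarrow> bool" and p :: "'a \<Rightarrow> 'a \<Rightarrow> real" and k :: nat
    and x y a b :: 'a and xs :: "'a list"
  assumes tree: "is_tree E" and bv: "bounded_valence E"
    and p_nonneg: "\<forall>u v. p u v \<ge> 0"
    and p_stoch: "\<forall>u. (p u has_sum 1) UNIV"
    and irred: "\<forall>u v. \<exists>n. pres p UNIV n u v > 0"
    and range_k: "\<forall>u v. gdist E u v > k \<longrightarrow> p u v = 0"
    and xy: "x \<noteq> y"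
    and geo: "is_geodesic E x y xs"
    and a: "a \<in> ball_k E k x - ball_k E k y"
    and b: "b \<in> ball_k E k y"
  shows "finite {cs \<in> Xi_geo E k p xs. cs ! 0 = a \<and> cs ! (length cs - 1) = b} \<and>
    (\<exists>r>0. \<forall>z::complex. norm z < r \<longrightarrow>
      green p z a b (- ball_k E k y) =
      (\<Sum>cs \<in> {cs \<in> Xi_geo E k p xs. cs ! 0 = a \<and> cs ! (length cs - 1) = b}.
         \<Prod>j \<in> {1..length cs - 1}.
           green p z (cs ! (j - 1)) (cs ! j) (- ball_k E k (xs ! cross_idx E k xs cs j))))"
proof -
  interpret tree E by unfold_locales (rule tree)
  have "finite {v. p u v \<noteq> 0}" for u
    by (rule finite_subset[OF _ finite_dist_le[OF bv, of u k]]) (use range_k not_less in blast)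
  then interpret tree_walk p E x y xs k
    using p_nonneg p_stoch geo bv range_k by unfold_locales auto
  have a0: "0 \<le> m" "a \<in> B (xs ! 0)" "a \<notin> B y" using a geodesic_0 by auto
  have "{cs \<in> Xi_geo E k p xs. cs ! 0 = a \<and> cs ! (length cs - 1) = b} = chains a b"
    using Xi_geo_imp_chain chain_imp_Xi_geo chain_endpoints a b by blast
  moreover have "chain_weight z cs = (\<Prod>j \<in> {1..length cs - 1}.
      green p z (cs ! (j - 1)) (cs ! j) (- B (xs ! cross_idx E k xs cs j)))" for z cs
    by (simp add: chain_weight_def cross_idx_eq_crossing)
  ultimately show ?thesis
    using finite_chains[OF a0] green_eq_sum_chains[OF b _ a0] by (auto intro!: exI[of _ 1])
qed

end
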